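(* Let $D$ be a $\ast$-SH domain and let $I$ be a proper integral $\ast$-invertible $\ast$-ideal of $D$. Then $I$ is expressible, uniquely up to order, as a $\ast$-product of finitely many mutually $\ast$-comaximal $\ast$-homog ideals.
   Context: $\ast$ is a star operation on the integral domain $D$ of finite character. A $\ast$-ideal is a nonzero fractional ideal $I$ with $I^\ast=I$; of finite type if $I=J^\ast$ for some nonzero finitely generated $J$. A maximal $\ast$-ideal is an integral $\ast$-ideal maximal among proper integral $\ast$-ideals. $I$ is $\ast$-invertible if $(II^{-1})^\ast=D$. Ideals $A,B$ are $\ast$-comaximal if $(A+B)^\ast=D$. A $\ast$-homog ideal is a proper integral $\ast$-ideal $I$ of finite type such that $(A+B)^\ast\neq D$ for every pair $A,B$ of proper integral $\ast$-ideals of finite type containing $I$. $D$ is a $\ast$-SH domain if for every nonzero nonunit $x$, $xD=(I_1\cdots I_n)^\ast$ for finitely many $\ast$-homog ideals $I_i$. *)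

theory Defs
  imports "HOL-Library.Multiset"
begin

definition is_domain_in :: "'k::field set \<Rightarrow> bool" where
  "is_domain_in D \<longleftrightarrow> 0 \<in> D \<and> 1 \<in> D \<and>
     (\<forall>a\<in>D. \<forall>b\<in>D. a + b \<in> D \<and> a - b \<in> D \<and> a * b \<in> D) \<and>
     (\<forall>x. \<exists>a\<in>D. \<exists>b\<in>D. b \<noteq> 0 \<and> x = a / b)"

definition frac_ideal :: "'k::field set \<Rightarrow> 'k set \<Rightarrow> bool" where
  "frac_ideal D I \<longleftrightarrow> 0 \<in> I \<and> (\<forall>x\<in>I. \<forall>y\<in>I. x + y \<in> I) \<and>
     (\<forall>d\<in>D. \<forall>x\<in>I. d * x \<in> I) \<and> I \<noteq> {0} \<and>
     (\<exists>d\<in>D. d \<noteq> 0 \<and> (\<forall>x\<in>I. d * x \<in> D))"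

definition principal :: "'k::field set \<Rightarrow> 'k \<Rightarrow> 'k set" where
  "principal D x = {x * d | d. d \<in> D}"

definition smult_set :: "'k::field \<Rightarrow> 'k set \<Rightarrow> 'k set" where
  "smult_set x I = (\<lambda>y. x * y) ` I"

definition gen :: "'k::field set \<Rightarrow> 'k set \<Rightarrow> 'k set" where
  "gen D S = {\<Sum>s\<in>S. c s * s | c. \<forall>s\<in>S. c s \<in> D}"

definition fin_gen :: "'k::field set \<Rightarrow> 'k set \<Rightarrow> bool" where
  "fin_gen D J \<longleftrightarrow> (\<exists>S. finite S \<and> J = gen D S)"

definition idsum :: "'k::field set \<Rightarrow> 'k set \<Rightarrow> 'k set" where
  "idsum I J = {a + b | a b. a \<in> I \<and> b \<in> J}"

definition idprod :: "'k::field set \<Rightarrow> 'k set \<Rightarrow> 'k set" where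
  "idprod I J = {\<Sum>i<n. a i * b i | (n::nat) a b. \<forall>i<n. a i \<in> I \<and> b i \<in> J}"

definition idprod_list :: "'k::field set \<Rightarrow> 'k set list \<Rightarrow> 'k set" where
  "idprod_list D Is = foldr idprod Is D"

definition idinv :: "'k::field set \<Rightarrow> 'k set \<Rightarrow> 'k set" where
  "idinv D I = {x. \<forall>y\<in>I. x * y \<in> D}"

definition star_operation :: "'k::field set \<Rightarrow> ('k set \<Rightarrow> 'k set) \<Rightarrow> bool" where
  "star_operation D st \<longleftrightarrow>
     (\<forall>I. frac_ideal D I \<longrightarrow> frac_ideal D (st I) \<and> I \<subseteq> st I \<and> st (st I) = st I) \<and>
     (\<forall>I J. frac_ideal D I \<and> frac_ideal D J \<and> I \<subseteq> J \<longrightarrow> st I \<subseteq> st J) \<and>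
     (\<forall>x. x \<noteq> 0 \<longrightarrow> st (principal D x) = principal D x) \<and>
     (\<forall>x I. x \<noteq> 0 \<and> frac_ideal D I \<longrightarrow> st (smult_set x I) = smult_set x (st I))"

definition finite_character :: "'k::field set \<Rightarrow> ('k set \<Rightarrow> 'k set) \<Rightarrow> bool" where
  "finite_character D st \<longleftrightarrow>
     (\<forall>I. frac_ideal D I \<longrightarrow>
        st I = \<Union>{st J | J. frac_ideal D J \<and> fin_gen D J \<and> J \<subseteq> I})"

definition star_ideal :: "'k::field set \<Rightarrow> ('k set \<Rightarrow> 'k set) \<Rightarrow> 'k set \<Rightarrow> bool" where
  "star_ideal D st I \<longleftrightarrow> frac_ideal D I \<and> st I = I"

definition finite_type :: "'k::field set \<Rightarrow> ('k set \<Rightarrow> 'k set) \<Rightarrow> 'k set \<Rightarrow> bool" where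
  "finite_type D st I \<longleftrightarrow> (\<exists>J. frac_ideal D J \<and> fin_gen D J \<and> I = st J)"

definition star_invertible :: "'k::field set \<Rightarrow> ('k set \<Rightarrow> 'k set) \<Rightarrow> 'k set \<Rightarrow> bool" where
  "star_invertible D st I \<longleftrightarrow> frac_ideal D I \<and> st (idprod I (idinv D I)) = D"

definition star_comaximal :: "'k::field set \<Rightarrow> ('k set \<Rightarrow> 'k set) \<Rightarrow> 'k set \<Rightarrow> 'k set \<Rightarrow> bool" where
  "star_comaximal D st A B \<longleftrightarrow> st (idsum A B) = D"

definition pift :: "'k::field set \<Rightarrow> ('k set \<Rightarrow> 'k set) \<Rightarrow> 'k set \<Rightarrow> bool" where
  "pift D st I \<longleftrightarrow> star_ideal D st I \<and> I \<subseteq> D \<and> I \<noteq> D \<and> finite_type D st I"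

definition star_homog :: "'k::field set \<Rightarrow> ('k set \<Rightarrow> 'k set) \<Rightarrow> 'k set \<Rightarrow> bool" where
  "star_homog D st I \<longleftrightarrow> pift D st I \<and>
     (\<forall>A B. pift D st A \<and> pift D st B \<and> I \<subseteq> A \<and> I \<subseteq> B \<longrightarrow> st (idsum A B) \<noteq> D)"

definition star_SH :: "'k::field set \<Rightarrow> ('k set \<Rightarrow> 'k set) \<Rightarrow> bool" where
  "star_SH D st \<longleftrightarrow> (\<forall>x\<in>D. x \<noteq> 0 \<and> inverse x \<notin> D \<longrightarrow>
     (\<exists>Is. (\<forall>J\<in>set Is. star_homog D st J) \<and> principal D x = st (idprod_list D Is)))"

definition homog_comax_factorization ::
  "'k::field set \<Rightarrow> ('k set \<Rightarrow> 'k set) \<Rightarrow> 'k set \<Rightarrow> 'k set list \<Rightarrow> bool" where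
  "homog_comax_factorization D st I Is \<longleftrightarrow>
     (\<forall>J\<in>set Is. star_homog D st J) \<and>
     (\<forall>i<length Is. \<forall>j<length Is. i \<noteq> j \<longrightarrow> star_comaximal D st (Is ! i) (Is ! j)) \<and>
     I = st (idprod_list D Is)"

end

theory Submission
  imports Defs
begin

text \<open>
  Existence: a nonzero \<open>x \<in> I\<close> is a nonunit, so \<open>xD = (H\<^sub>1 \<cdots> H\<^sub>n)\<^sup>*\<close> with \<open>\<ast>\<close>-homog \<open>H\<^sub>i\<close>.
  The \<open>\<ast>\<close>-product of two \<open>\<ast>\<close>-homog ideals that are not \<open>\<ast>\<close>-comaximal is again \<open>\<ast>\<close>-homog, so
  merging such pairs we may assume the \<open>H\<^sub>i\<close> mutually \<open>\<ast>\<close>-comaximal. Then the ideals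
  \<open>(I + H\<^sub>i)\<^sup>* \<noteq> D\<close> are \<open>\<ast>\<close>-homog (they contain \<open>H\<^sub>i\<close>, and \<open>I\<close> is of finite type because it is
  \<open>\<ast>\<close>-invertible and \<open>\<ast>\<close> has finite character), mutually \<open>\<ast>\<close>-comaximal, and their \<open>\<ast>\<close>-product is \<open>I\<close>:
  it lies in \<open>(I + xD)\<^sup>* = I\<close>, and it contains \<open>I\<close> because for \<open>\<ast>\<close>-comaximal integral ideals
  \<open>A \<inter> B \<subseteq> (AB)\<^sup>*\<close>.

  Uniqueness: a factor \<open>J\<close> of one factorization contains the \<open>\<ast>\<close>-product of the other one. By
  \<open>\<ast>\<close>-cancellation of the factors \<open>\<ast>\<close>-comaximal to \<open>J\<close>, it contains the unique factor \<open>K\<close> that is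
  not \<open>\<ast>\<close>-comaximal to \<open>J\<close>; by symmetry \<open>J = K\<close>. Finally, the factors of a factorization are
  distinct, since no \<open>\<ast>\<close>-homog ideal is \<open>\<ast>\<close>-comaximal to itself.
\<close>

section \<open>Submodules of the quotient field and their sums and products\<close>

definition submodule :: "'k::field set \<Rightarrow> 'k set \<Rightarrow> bool" where
  "submodule D M \<longleftrightarrow> 0 \<in> M \<and> (\<forall>x\<in>M. \<forall>y\<in>M. x + y \<in> M) \<and> (\<forall>d\<in>D. \<forall>x\<in>M. d * x \<in> M)"

lemma submoduleI:
  "0 \<in> M \<Longrightarrow> (\<And>x y. x \<in> M \<Longrightarrow> y \<in> M \<Longrightarrow> x + y \<in> M) \<Longrightarrow>
    (\<And>d x. d \<in> D \<Longrightarrow> x \<in> M \<Longrightarrow> d * x \<in> M) \<Longrightarrow> submodule D M"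
  unfolding submodule_def by blast

lemma submodule_zero: "submodule D M \<Longrightarrow> 0 \<in> M"
  unfolding submodule_def by blast

lemma submodule_add: "submodule D M \<Longrightarrow> x \<in> M \<Longrightarrow> y \<in> M \<Longrightarrow> x + y \<in> M"
  unfolding submodule_def by blast

lemma submodule_mult: "submodule D M \<Longrightarrow> d \<in> D \<Longrightarrow> x \<in> M \<Longrightarrow> d * x \<in> M"
  unfolding submodule_def by blast

lemma submodule_sum: "submodule D M \<Longrightarrow> (\<And>i. i \<in> F \<Longrightarrow> f i \<in> M) \<Longrightarrow> sum f F \<in> M"
  by (induction F rule: infinite_finite_induct) (auto simp: submodule_zero submodule_add)

lemma submodule_Int: "submodule D A \<Longrightarrow> submodule D B \<Longrightarrow> submodule D (A \<inter> B)"
  unfolding submodule_def by blast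

lemma sum_lessThan_add:
  fixes n m :: nat
  shows "(\<Sum>i<n + m. f i) = (\<Sum>i<n. f i) + (\<Sum>i<m. f (i + n) :: 'a::comm_monoid_add)"
  by (induction m) (auto simp: add_ac)

lemma zero_in_idprod: "0 \<in> idprod A B"
  unfolding idprod_def by (rule CollectI, rule exI[of _ 0]) auto

lemma mult_in_idprod: "a \<in> A \<Longrightarrow> b \<in> B \<Longrightarrow> a * b \<in> idprod A B"
  unfolding idprod_def
  by (rule CollectI, rule exI[of _ 1], rule exI[of _ "\<lambda>_. a"], rule exI[of _ "\<lambda>_. b"]) auto

lemma add_in_idprod:
  assumes "u \<in> idprod A B" "v \<in> idprod A B"
  shows "u + v \<in> idprod A B"
proof -
  obtain n :: nat and a b where u: "u = (\<Sum>i<n. a i * b i)" "\<forall>i<n. a i \<in> A \<and> b i \<in> B"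
    using assms(1) unfolding idprod_def by blast
  obtain m :: nat and a' b' where v: "v = (\<Sum>i<m. a' i * b' i)" "\<forall>i<m. a' i \<in> A \<and> b' i \<in> B"
    using assms(2) unfolding idprod_def by blast
  define c where "c i = (if i < n then a i else a' (i - n))" for i
  define e where "e i = (if i < n then b i else b' (i - n))" for i
  have "u + v = (\<Sum>i<n + m. c i * e i)"
    unfolding sum_lessThan_add u v c_def e_def by simp
  moreover have "\<forall>i<n + m. c i \<in> A \<and> e i \<in> B"
    using u v unfolding c_def e_def by auto
  ultimately show ?thesis
    unfolding idprod_def by blast
qed

lemma idprod_induct [consumes 1, case_names zero mult add]:
  assumes "u \<in> idprod A B" "P 0" "\<And>a b. a \<in> A \<Longrightarrow> b \<in> B \<Longrightarrow> P (a * b)"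
    "\<And>x y. P x \<Longrightarrow> P y \<Longrightarrow> P (x + y)"
  shows "P u"
proof -
  obtain n :: nat and a b where u: "u = (\<Sum>i<n. a i * b i)" "\<forall>i<n. a i \<in> A \<and> b i \<in> B"
    using assms(1) unfolding idprod_def by blast
  have "P (\<Sum>i<n. a i * b i)"
    using u(2) by (induction n) (auto simp: assms)
  then show ?thesis
    using u by simp
qed

lemma idprod_least:
  "0 \<in> C \<Longrightarrow> (\<And>x y. x \<in> C \<Longrightarrow> y \<in> C \<Longrightarrow> x + y \<in> C) \<Longrightarrow>
    (\<And>a b. a \<in> A \<Longrightarrow> b \<in> B \<Longrightarrow> a * b \<in> C) \<Longrightarrow> idprod A B \<subseteq> C"
  by (auto elim: idprod_induct[where P = "\<lambda>u. u \<in> C"])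

lemma idprod_subset_submodule:
  "submodule D C \<Longrightarrow> (\<And>a b. a \<in> A \<Longrightarrow> b \<in> B \<Longrightarrow> a * b \<in> C) \<Longrightarrow> idprod A B \<subseteq> C"
  by (rule idprod_least) (auto simp: submodule_zero submodule_add)

lemma submodule_idprod:
  assumes "submodule D A"
  shows "submodule D (idprod A B)"
proof (rule submoduleI)
  fix d u assume "d \<in> D" "u \<in> idprod A B"
  from \<open>u \<in> idprod A B\<close> show "d * u \<in> idprod A B"
  proof (induction rule: idprod_induct)
    case (mult a b)
    then show ?case
      using assms \<open>d \<in> D\<close> by (metis mult_in_idprod submodule_mult mult.assoc)
  qed (auto simp: zero_in_idprod add_in_idprod distrib_left)
qed (auto simp: zero_in_idprod add_in_idprod)

lemma idprod_commute: "idprod A B = idprod B A"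
  by (intro subset_antisym idprod_least)
    (auto simp: zero_in_idprod add_in_idprod, (metis mult_in_idprod mult.commute)+)

lemma idprod_assoc: "idprod (idprod A B) C = idprod A (idprod B C)"
proof -
  have *: "idprod (idprod A B) C \<subseteq> idprod A (idprod B C)" for A B C :: "'a::field set"
  proof (rule idprod_least)
    fix v c assume "v \<in> idprod A B" "c \<in> C"
    from \<open>v \<in> idprod A B\<close> show "v * c \<in> idprod A (idprod B C)"
      by (induction rule: idprod_induct)
        (auto simp: zero_in_idprod add_in_idprod distrib_right mult.assoc
          intro!: mult_in_idprod \<open>c \<in> C\<close>)
  qed (auto simp: zero_in_idprod add_in_idprod)
  show ?thesis
    by (metis * idprod_commute subset_antisym)
qed

lemma idprod_left_commute: "idprod A (idprod B C) = idprod B (idprod A C)"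
  by (metis idprod_assoc idprod_commute)

lemma idprod_mono: "A \<subseteq> A' \<Longrightarrow> B \<subseteq> B' \<Longrightarrow> idprod A B \<subseteq> idprod A' B'"
  by (rule idprod_least) (auto simp: zero_in_idprod add_in_idprod intro!: mult_in_idprod)

lemma idprod_subset_right: "A \<subseteq> D \<Longrightarrow> submodule D B \<Longrightarrow> idprod A B \<subseteq> B"
  by (rule idprod_subset_submodule) (auto simp: submodule_mult)

lemma idsum_subset_left: "submodule D B \<Longrightarrow> A \<subseteq> idsum A B"
  unfolding idsum_def by (force dest: submodule_zero)

lemma idsum_subset_right: "submodule D A \<Longrightarrow> B \<subseteq> idsum A B"
  unfolding idsum_def by (force dest: submodule_zero)

lemma idsum_least: "submodule D C \<Longrightarrow> A \<subseteq> C \<Longrightarrow> B \<subseteq> C \<Longrightarrow> idsum A B \<subseteq> C"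
  unfolding idsum_def using submodule_add by blast

lemma idsum_commute: "idsum A B = idsum B A"
  unfolding idsum_def by (auto simp: add.commute) (metis add.commute)+

lemma idsum_mono: "A \<subseteq> A' \<Longrightarrow> B \<subseteq> B' \<Longrightarrow> idsum A B \<subseteq> idsum A' B'"
  unfolding idsum_def by blast

lemma submodule_idsum:
  assumes A: "submodule D A" and B: "submodule D B"
  shows "submodule D (idsum A B)"
proof (rule submoduleI)
  show "0 \<in> idsum A B"
    using idsum_subset_left[OF B] submodule_zero[OF A] by blast
  fix u v assume "u \<in> idsum A B" "v \<in> idsum A B"
  then obtain a b a' b' where "u = a + b" "v = a' + b'" "a \<in> A" "a' \<in> A" "b \<in> B" "b' \<in> B"
    unfolding idsum_def by blast
  moreover have "(a + b) + (a' + b') = (a + a') + (b + b')"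
    by (simp add: algebra_simps)
  ultimately show "u + v \<in> idsum A B"
    unfolding idsum_def using A B by (blast intro: submodule_add)
next
  fix d u assume "d \<in> D" "u \<in> idsum A B"
  then obtain a b where "u = a + b" "a \<in> A" "b \<in> B"
    unfolding idsum_def by blast
  then show "d * u \<in> idsum A B"
    unfolding idsum_def using A B \<open>d \<in> D\<close> by (auto simp: distrib_left intro: submodule_mult)
qed

lemma idsum_absorb: "submodule D A \<Longrightarrow> B \<subseteq> A \<Longrightarrow> 0 \<in> B \<Longrightarrow> idsum A B = A"
  unfolding idsum_def by (force dest: submodule_add)

lemma idprod_list_Nil: "idprod_list D [] = D"
  unfolding idprod_list_def by simp

lemma idprod_list_Cons: "idprod_list D (A # As) = idprod A (idprod_list D As)"
  unfolding idprod_list_def by simp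

lemma idprod_list_remove1:
  "A \<in> set As \<Longrightarrow> idprod_list D As = idprod A (idprod_list D (remove1 A As))"
  by (induction As) (auto simp: idprod_list_Cons idprod_left_commute)

lemma idprod_list_mset_eq: "mset As = mset Bs \<Longrightarrow> idprod_list D As = idprod_list D Bs"
proof (induction As arbitrary: Bs)
  case (Cons A As)
  then have "A \<in> set Bs"
    by (metis list.set_intros(1) set_mset_mset)
  moreover have "mset As = mset (remove1 A Bs)"
    using Cons.prems by (simp flip: Cons.prems)
  ultimately show ?case
    using Cons.IH idprod_list_remove1 by (metis idprod_list_Cons)
qed simp

section \<open>Pairwise relations along a list\<close>

definition pairwise_list :: "('a \<Rightarrow> 'a \<Rightarrow> bool) \<Rightarrow> 'a list \<Rightarrow> bool" where
  "pairwise_list R xs \<longleftrightarrow> (\<forall>i<length xs. \<forall>j<length xs. i \<noteq> j \<longrightarrow> R (xs ! i) (xs ! j))"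

lemma pairwise_list_Nil [simp]: "pairwise_list R []"
  unfolding pairwise_list_def by simp

lemma pairwise_list_Cons:
  assumes "symp R"
  shows "pairwise_list R (x # xs) \<longleftrightarrow> (\<forall>y\<in>set xs. R x y) \<and> pairwise_list R xs"
proof -
  have "pairwise_list R (x # xs) \<longleftrightarrow>
      (\<forall>j<length xs. R x (xs ! j) \<and> R (xs ! j) x) \<and> pairwise_list R xs"
    unfolding pairwise_list_def by (auto simp: less_Suc_eq_0_disj nth_Cons split: nat.splits)
  also have "\<dots> \<longleftrightarrow> (\<forall>y\<in>set xs. R x y) \<and> pairwise_list R xs"
    using assms by (auto simp: all_set_conv_all_nth dest: sympD)
  finally show ?thesis .
qed

lemma pairwise_list_iff_remove1:
  assumes "symp R"
  shows "pairwise_list R xs \<longleftrightarrow> (\<forall>x\<in>set xs. \<forall>y\<in>set (remove1 x xs). R x y)"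
proof (induction xs)
  case (Cons a xs)
  then show ?case
    using assms by (auto simp: pairwise_list_Cons dest: sympD) (metis in_mono set_remove1_subset)
qed simp

lemma pairwise_list_map:
  "pairwise_list R xs \<Longrightarrow> (\<And>x y. x \<in> set xs \<Longrightarrow> y \<in> set xs \<Longrightarrow> R x y \<Longrightarrow> S (f x) (f y)) \<Longrightarrow>
    pairwise_list S (map f xs)"
  unfolding pairwise_list_def by auto

lemma pairwise_list_filter: "symp R \<Longrightarrow> pairwise_list R xs \<Longrightarrow> pairwise_list R (filter P xs)"
  by (induction xs) (auto simp: pairwise_list_Cons)

lemma pairwise_list_distinct:
  "pairwise_list R xs \<Longrightarrow> (\<And>x. x \<in> set xs \<Longrightarrow> \<not> R x x) \<Longrightarrow> distinct xs"
  unfolding pairwise_list_def distinct_conv_nth by (metis nth_mem)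

section \<open>Fractional ideals\<close>

lemma frac_ideal_iff:
  "frac_ideal D A \<longleftrightarrow> submodule D A \<and> A \<noteq> {0} \<and> (\<exists>d\<in>D. d \<noteq> 0 \<and> (\<forall>x\<in>A. d * x \<in> D))"
  unfolding frac_ideal_def submodule_def by blast

lemma frac_ideal_submodule: "frac_ideal D A \<Longrightarrow> submodule D A"
  by (simp add: frac_ideal_iff)

lemma frac_ideal_zero: "frac_ideal D A \<Longrightarrow> 0 \<in> A"
  by (simp add: frac_ideal_def)

lemma frac_ideal_nonzero:
  assumes "frac_ideal D A"
  obtains a where "a \<in> A" "a \<noteq> 0"
  using assms frac_ideal_zero unfolding frac_ideal_def by blast

lemma frac_ideal_bounded:
  assumes "frac_ideal D A"
  obtains d where "d \<in> D" "d \<noteq> 0" "\<And>x. x \<in> A \<Longrightarrow> d * x \<in> D"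
  using assms unfolding frac_ideal_def by blast

lemma frac_ideal_subset:
  "frac_ideal D I \<Longrightarrow> submodule D A \<Longrightarrow> A \<subseteq> I \<Longrightarrow> A \<noteq> {0} \<Longrightarrow> frac_ideal D A"
  unfolding frac_ideal_iff by blast

locale domain_in =
  fixes D :: "'k::field set"
  assumes domain: "is_domain_in D"
begin

lemma zero_in_D: "0 \<in> D"
  and one_in_D: "1 \<in> D"
  and add_in_D: "a \<in> D \<Longrightarrow> b \<in> D \<Longrightarrow> a + b \<in> D"
  and mult_in_D: "a \<in> D \<Longrightarrow> b \<in> D \<Longrightarrow> a * b \<in> D"
  and fraction_of_D: "\<exists>a\<in>D. \<exists>b\<in>D. b \<noteq> 0 \<and> x = a / b"
  using domain unfolding is_domain_in_def by auto

lemma submodule_D: "submodule D D"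
  by (intro submoduleI zero_in_D add_in_D mult_in_D)

lemma frac_ideal_integral: "submodule D A \<Longrightarrow> A \<subseteq> D \<Longrightarrow> A \<noteq> {0} \<Longrightarrow> frac_ideal D A"
  unfolding frac_ideal_iff using one_in_D by (metis mult_1 one_neq_zero subsetD)

lemma frac_ideal_D: "frac_ideal D D"
  using frac_ideal_integral[OF submodule_D order_refl] one_in_D by (metis one_neq_zero singletonD)

lemma submodule_bounded: "submodule D {x. d * x \<in> D}"
  by (intro submoduleI) (auto simp: distrib_left mult.left_commute intro: zero_in_D add_in_D mult_in_D)

lemma frac_ideal_idprod:
  assumes A: "frac_ideal D A" and B: "frac_ideal D B"
  shows "frac_ideal D (idprod A B)"
proof -
  obtain a b where "a \<in> A" "a \<noteq> 0" "b \<in> B" "b \<noteq> 0"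
    using A B by (metis frac_ideal_nonzero)
  then have "idprod A B \<noteq> {0}"
    using mult_in_idprod by force
  moreover obtain d e where d: "d \<in> D" "d \<noteq> 0" "\<And>x. x \<in> A \<Longrightarrow> d * x \<in> D"
    and e: "e \<in> D" "e \<noteq> 0" "\<And>y. y \<in> B \<Longrightarrow> e * y \<in> D"
    using A B by (metis frac_ideal_bounded)
  moreover have "idprod A B \<subseteq> {u. d * e * u \<in> D}"
  proof (rule idprod_subset_submodule[OF submodule_bounded])
    fix x y assume "x \<in> A" "y \<in> B"
    then have "(d * x) * (e * y) \<in> D"
      using d e by (simp add: mult_in_D)
    then show "x * y \<in> {u. d * e * u \<in> D}"
      by (simp add: ac_simps)
  qed
  ultimately show ?thesis
    unfolding frac_ideal_iff using submodule_idprod[OF frac_ideal_submodule[OF A]] mult_in_D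
    by (metis mem_Collect_eq mult_eq_0_iff subsetD)
qed

lemma frac_ideal_idsum:
  assumes A: "frac_ideal D A" and B: "frac_ideal D B"
  shows "frac_ideal D (idsum A B)"
proof -
  have "A \<subseteq> idsum A B"
    by (rule idsum_subset_left[OF frac_ideal_submodule[OF B]])
  then have "idsum A B \<noteq> {0}"
    using A by (metis frac_ideal_nonzero singletonD subsetD)
  moreover obtain d e where d: "d \<in> D" "d \<noteq> 0" "\<And>x. x \<in> A \<Longrightarrow> d * x \<in> D"
    and e: "e \<in> D" "e \<noteq> 0" "\<And>y. y \<in> B \<Longrightarrow> e * y \<in> D"
    using A B by (metis frac_ideal_bounded)
  moreover have "idsum A B \<subseteq> {u. d * e * u \<in> D}"
  proof (rule idsum_least[OF submodule_bounded])
    have "e * (d * x) \<in> D" if "x \<in> A" for x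
      using that d e by (simp add: mult_in_D)
    then show "A \<subseteq> {u. d * e * u \<in> D}"
      by (auto simp: ac_simps)
    have "d * (e * y) \<in> D" if "y \<in> B" for y
      using that d e by (simp add: mult_in_D)
    then show "B \<subseteq> {u. d * e * u \<in> D}"
      by (auto simp: ac_simps)
  qed
  ultimately show ?thesis
    unfolding frac_ideal_iff using submodule_idsum[OF frac_ideal_submodule[OF A] frac_ideal_submodule[OF B]] mult_in_D
    by (metis mem_Collect_eq mult_eq_0_iff subsetD)
qed

lemma frac_ideal_smult_set:
  assumes A: "frac_ideal D A" and "x \<noteq> 0"
  shows "frac_ideal D (smult_set x A)"
proof -
  have M: "submodule D A"
    using A by (rule frac_ideal_submodule)
  obtain a where "a \<in> A" "a \<noteq> 0"
    using A by (rule frac_ideal_nonzero)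
  then have "smult_set x A \<noteq> {0}"
    using \<open>x \<noteq> 0\<close> unfolding smult_set_def by (metis image_eqI mult_eq_0_iff singletonD)
  moreover have "submodule D (smult_set x A)"
  proof (rule submoduleI)
    show "0 \<in> smult_set x A"
      using submodule_zero[OF M] unfolding smult_set_def by force
    fix u v assume "u \<in> smult_set x A" "v \<in> smult_set x A"
    then obtain a b where "u = x * a" "v = x * b" "a \<in> A" "b \<in> A"
      unfolding smult_set_def by blast
    then show "u + v \<in> smult_set x A"
      using submodule_add[OF M] unfolding smult_set_def by (metis distrib_left image_eqI)
  next
    fix c u assume "c \<in> D" "u \<in> smult_set x A"
    then obtain a where "u = x * a" "a \<in> A"
      unfolding smult_set_def by blast
    then show "c * u \<in> smult_set x A"
      using submodule_mult[OF M \<open>c \<in> D\<close>] unfolding smult_set_def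
      by (metis image_eqI mult.left_commute)
  qed
  moreover obtain d where d: "d \<in> D" "d \<noteq> 0" "\<And>y. y \<in> A \<Longrightarrow> d * y \<in> D"
    using A by (metis frac_ideal_bounded)
  obtain p q where pq: "p \<in> D" "q \<in> D" "q \<noteq> 0" "x = p / q"
    using fraction_of_D by blast
  have "q * d * u \<in> D" if "u \<in> smult_set x A" for u
  proof -
    obtain y where "y \<in> A" "u = x * y"
      using \<open>u \<in> smult_set x A\<close> unfolding smult_set_def by blast
    then have "q * d * u = p * (d * y)"
      using pq by (simp add: field_simps)
    with mult_in_D[OF pq(1) d(3)[OF \<open>y \<in> A\<close>]] show ?thesis
      by (simp only:)
  qed
  moreover have "q * d \<in> D" "q * d \<noteq> 0"
    using pq d by (simp_all add: mult_in_D)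
  ultimately show ?thesis
    unfolding frac_ideal_iff by blast
qed

lemma principal_one: "principal D 1 = D"
  unfolding principal_def by auto

lemma principal_subset: "submodule D A \<Longrightarrow> x \<in> A \<Longrightarrow> principal D x \<subseteq> A"
  unfolding principal_def by (auto simp: mult.commute intro: submodule_mult)

lemma idprod_D_left: "submodule D A \<Longrightarrow> idprod D A = A"
  using idprod_subset_right[OF order_refl] mult_in_idprod[OF one_in_D] by (metis mult_1 subsetI subset_antisym)

lemma idprod_D_right: "submodule D A \<Longrightarrow> idprod A D = A"
  by (metis idprod_D_left idprod_commute)

lemma idprod_integral: "A \<subseteq> D \<Longrightarrow> B \<subseteq> D \<Longrightarrow> idprod A B \<subseteq> D"
  using idprod_mono[OF order_refl] idprod_subset_right[OF _ submodule_D] by blast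

lemma idsum_integral: "A \<subseteq> D \<Longrightarrow> B \<subseteq> D \<Longrightarrow> idsum A B \<subseteq> D"
  by (rule idsum_least[OF submodule_D])

lemma submodule_idprod_list: "submodule D (idprod_list D As)"
  by (induction As) (simp_all add: idprod_list_Nil idprod_list_Cons submodule_D,
      metis idprod_commute submodule_idprod)

lemma gen_submodule: "submodule D (gen D S)"
proof (rule submoduleI)
  show "0 \<in> gen D S"
    unfolding gen_def using zero_in_D by (intro CollectI exI[of _ "\<lambda>_. 0"]) auto
  fix u v assume "u \<in> gen D S" "v \<in> gen D S"
  then obtain c e where "u = (\<Sum>s\<in>S. c s * s)" "v = (\<Sum>s\<in>S. e s * s)" "\<forall>s\<in>S. c s \<in> D" "\<forall>s\<in>S. e s \<in> D"
    unfolding gen_def by blast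
  then show "u + v \<in> gen D S"
    unfolding gen_def using add_in_D
    by (intro CollectI exI[of _ "\<lambda>s. c s + e s"]) (auto simp: sum.distrib distrib_right)
next
  fix d u assume "d \<in> D" "u \<in> gen D S"
  then obtain c where "u = (\<Sum>s\<in>S. c s * s)" "\<forall>s\<in>S. c s \<in> D"
    unfolding gen_def by blast
  then show "d * u \<in> gen D S"
    unfolding gen_def using mult_in_D \<open>d \<in> D\<close>
    by (intro CollectI exI[of _ "\<lambda>s. d * c s"]) (auto simp: sum_distrib_left mult.assoc)
qed

lemma gen_mem:
  assumes "finite S" "s \<in> S"
  shows "s \<in> gen D S"
proof -
  have "(\<Sum>t\<in>S. (if t = s then 1 else 0) * t) = (\<Sum>t\<in>S. if t = s then t else 0)"
    by (rule sum.cong) auto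
  also have "\<dots> = s"
    using assms by simp
  finally have "(\<Sum>t\<in>S. (if t = s then 1 else 0) * t) = s" .
  then show ?thesis
    unfolding gen_def using zero_in_D one_in_D
    by (intro CollectI exI[of _ "\<lambda>t. if t = s then 1 else 0"]) auto
qed

lemma gen_least: "submodule D M \<Longrightarrow> S \<subseteq> M \<Longrightarrow> gen D S \<subseteq> M"
  unfolding gen_def by (auto intro!: submodule_sum submodule_mult)

lemma gen_mono: "finite T \<Longrightarrow> S \<subseteq> T \<Longrightarrow> gen D S \<subseteq> gen D T"
  using gen_least[OF gen_submodule, of S T] gen_mem by blast

lemma idsum_gen:
  assumes "finite S" "finite T"
  shows "idsum (gen D S) (gen D T) = gen D (S \<union> T)"
proof
  show "idsum (gen D S) (gen D T) \<subseteq> gen D (S \<union> T)"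
    using assms by (intro idsum_least[OF gen_submodule] gen_mono) auto
  have "S \<subseteq> gen D S" "T \<subseteq> gen D T"
    using assms gen_mem by blast+
  then have "S \<union> T \<subseteq> idsum (gen D S) (gen D T)"
    using idsum_subset_left[OF gen_submodule] idsum_subset_right[OF gen_submodule] by blast
  then show "gen D (S \<union> T) \<subseteq> idsum (gen D S) (gen D T)"
    by (intro gen_least submodule_idsum gen_submodule)
qed

lemma idprod_gen:
  assumes "finite S" "finite T"
  shows "idprod (gen D S) (gen D T) = gen D ((\<lambda>(s, t). s * t) ` (S \<times> T))"
    (is "_ = gen D ?ST")
proof
  have "finite ?ST"
    using assms by simp
  have "?ST \<subseteq> idprod (gen D S) (gen D T)"
    using assms by (auto intro!: mult_in_idprod gen_mem)
  then show "gen D ?ST \<subseteq> idprod (gen D S) (gen D T)"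
    by (intro gen_least submodule_idprod gen_submodule)
  show "idprod (gen D S) (gen D T) \<subseteq> gen D ?ST"
  proof (rule idprod_subset_submodule[OF gen_submodule])
    fix a b assume "a \<in> gen D S" "b \<in> gen D T"
    then obtain c e where ab: "a = (\<Sum>s\<in>S. c s * s)" "b = (\<Sum>t\<in>T. e t * t)"
      and ce: "\<forall>s\<in>S. c s \<in> D" "\<forall>t\<in>T. e t \<in> D"
      unfolding gen_def by blast
    have "a * b = (\<Sum>s\<in>S. \<Sum>t\<in>T. (c s * e t) * (s * t))"
      unfolding ab sum_product by (simp add: ac_simps)
    also have "\<dots> \<in> gen D ?ST"
    proof (intro submodule_sum[OF gen_submodule])
      fix s t assume "s \<in> S" "t \<in> T"
      then have "c s * e t \<in> D" "s * t \<in> gen D ?ST"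
        using ce \<open>finite ?ST\<close> by (auto intro: mult_in_D gen_mem)
      then show "c s * e t * (s * t) \<in> gen D ?ST"
        by (rule submodule_mult[OF gen_submodule])
    qed
    finally show "a * b \<in> gen D ?ST" .
  qed
qed

lemma frac_ideal_idprod_list:
  "(\<And>A. A \<in> set As \<Longrightarrow> frac_ideal D A) \<Longrightarrow> frac_ideal D (idprod_list D As)"
  by (induction As) (auto simp: idprod_list_Nil idprod_list_Cons frac_ideal_D frac_ideal_idprod)

lemma idprod_list_integral: "(\<And>A. A \<in> set As \<Longrightarrow> A \<subseteq> D) \<Longrightarrow> idprod_list D As \<subseteq> D"
  by (induction As) (simp_all add: idprod_list_Nil idprod_list_Cons idprod_integral)

lemma idprod_list_filter_D: "idprod_list D (filter (\<lambda>A. A \<noteq> D) As) = idprod_list D As"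
  by (induction As) (auto simp: idprod_list_Cons idprod_D_left submodule_idprod_list)

lemma frac_ideal_idinv:
  assumes "frac_ideal D I"
  shows "frac_ideal D (idinv D I)"
proof -
  obtain d where d: "d \<in> D" "d \<noteq> 0" "\<And>x. x \<in> I \<Longrightarrow> d * x \<in> D"
    using assms by (metis frac_ideal_bounded)
  obtain a where a: "a \<in> I" "a \<noteq> 0"
    using assms by (rule frac_ideal_nonzero)
  have "submodule D (idinv D I)"
    unfolding idinv_def
  proof (rule submoduleI)
    fix x y assume "x \<in> {x. \<forall>y\<in>I. x * y \<in> D}" "y \<in> {x. \<forall>y\<in>I. x * y \<in> D}"
    then show "x + y \<in> {x. \<forall>y\<in>I. x * y \<in> D}"
      by (simp add: distrib_right add_in_D)
  next
    fix c x assume "c \<in> D" "x \<in> {x. \<forall>y\<in>I. x * y \<in> D}"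
    then show "c * x \<in> {x. \<forall>y\<in>I. x * y \<in> D}"
      by (simp add: mult.assoc mult_in_D)
  qed (simp add: zero_in_D)
  moreover have "d \<in> idinv D I"
    unfolding idinv_def using d by simp
  moreover have "d * a * y \<in> D" if "y \<in> idinv D I" for y
  proof -
    have "d * (y * a) \<in> D"
      using that a d unfolding idinv_def by (simp add: mult_in_D)
    then show ?thesis
      by (simp add: ac_simps)
  qed
  moreover have "d * a \<in> D" "d * a \<noteq> 0"
    using d a by simp_all
  ultimately show ?thesis
    unfolding frac_ideal_iff using d by blast
qed

lemma idprod_idinv_integral: "idprod I (idinv D I) \<subseteq> D"
  unfolding idinv_def by (rule idprod_subset_submodule[OF submodule_D]) (simp, metis mult.commute)

lemma idprod_finite_support:
  "u \<in> idprod A B \<Longrightarrow> \<exists>F. finite F \<and> F \<subseteq> A \<and> u \<in> idprod (gen D F) B"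
proof (induction rule: idprod_induct)
  case zero
  show ?case
    by (intro exI[of _ "{}"]) (simp add: zero_in_idprod)
next
  case (mult a b)
  then show ?case
    by (intro exI[of _ "{a}"]) (simp add: gen_mem mult_in_idprod)
next
  case (add x y)
  then obtain F G where "finite F" "F \<subseteq> A" "x \<in> idprod (gen D F) B"
    "finite G" "G \<subseteq> A" "y \<in> idprod (gen D G) B"
    by blast
  moreover have "idprod (gen D F) B \<subseteq> idprod (gen D (F \<union> G)) B"
    "idprod (gen D G) B \<subseteq> idprod (gen D (F \<union> G)) B"
    using \<open>finite F\<close> \<open>finite G\<close> by (simp_all add: gen_mono idprod_mono)
  ultimately show ?case
    by (intro exI[of _ "F \<union> G"]) (auto intro: add_in_idprod)
qed

lemma gen_subset_idprod_finite_support: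
  assumes "finite S" "S \<subseteq> idprod A B"
  obtains F where "finite F" "F \<subseteq> A" "gen D S \<subseteq> idprod (gen D F) B"
proof -
  have "\<forall>s\<in>S. \<exists>F. finite F \<and> F \<subseteq> A \<and> s \<in> idprod (gen D F) B"
    using assms(2) idprod_finite_support by blast
  from bchoice[OF this] obtain F
    where F: "\<forall>s\<in>S. finite (F s) \<and> F s \<subseteq> A \<and> s \<in> idprod (gen D (F s)) B"
    by blast
  let ?F = "\<Union>(F ` S)"
  have "finite ?F" "?F \<subseteq> A"
    using F assms(1) by auto
  have "S \<subseteq> idprod (gen D ?F) B"
  proof
    fix s assume "s \<in> S"
    then have "gen D (F s) \<subseteq> gen D ?F"
      using \<open>finite ?F\<close> by (intro gen_mono) auto
    then show "s \<in> idprod (gen D ?F) B"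
      using F \<open>s \<in> S\<close> idprod_mono[OF _ order_refl] by blast
  qed
  then have "gen D S \<subseteq> idprod (gen D ?F) B"
    by (intro gen_least submodule_idprod gen_submodule)
  with \<open>finite ?F\<close> \<open>?F \<subseteq> A\<close> show ?thesis
    by (rule that)
qed

lemma idprod_idsum_subset:
  assumes J: "submodule D J" "J \<subseteq> D" and A: "submodule D A" "A \<subseteq> D" and B: "B \<subseteq> D"
  shows "idprod (idsum J A) (idsum J B) \<subseteq> idsum J (idprod A B)"
proof (rule idprod_subset_submodule[OF submodule_idsum[OF J(1) submodule_idprod[OF A(1)]]])
  fix u v assume "u \<in> idsum J A" "v \<in> idsum J B"
  then obtain j a j' b where u: "u = j + a" "j \<in> J" "a \<in> A" and v: "v = j' + b" "j' \<in> J" "b \<in> B"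
    unfolding idsum_def by blast
  have "v \<in> D"
    using v J(2) B add_in_D by blast
  then have "v * j \<in> J" "a * j' \<in> J"
    using u v A(2) submodule_mult[OF J(1)] by blast+
  then have "v * j + a * j' \<in> J"
    by (rule submodule_add[OF J(1)])
  moreover have "a * b \<in> idprod A B"
    using u v by (simp add: mult_in_idprod)
  moreover have "u * v = (v * j + a * j') + a * b"
    unfolding u v by (simp add: algebra_simps)
  ultimately show "u * v \<in> idsum J (idprod A B)"
    unfolding idsum_def by blast
qed

lemma idprod_list_map_idsum_subset:
  assumes "submodule D J" "J \<subseteq> D" "\<And>A. A \<in> set As \<Longrightarrow> submodule D A \<and> A \<subseteq> D"
  shows "idprod_list D (map (idsum J) As) \<subseteq> idsum J (idprod_list D As)"
  using assms(3)
proof (induction As)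
  case Nil
  then show ?case
    using idsum_subset_right[OF assms(1)] by (simp add: idprod_list_Nil)
next
  case (Cons A As)
  have "idprod_list D (map (idsum J) (A # As)) \<subseteq> idprod (idsum J A) (idsum J (idprod_list D As))"
    using Cons by (simp add: idprod_list_Cons idprod_mono)
  also have "\<dots> \<subseteq> idsum J (idprod A (idprod_list D As))"
  proof (rule idprod_idsum_subset[OF assms(1,2)])
    show "submodule D A" "A \<subseteq> D"
      using Cons.prems by simp_all
    show "idprod_list D As \<subseteq> D"
      using Cons.prems by (intro idprod_list_integral) simp
  qed
  finally show ?case
    by (simp add: idprod_list_Cons)
qed

end

section \<open>Star operations\<close>

locale star_domain = domain_in +
  fixes st :: "'k::field set \<Rightarrow> 'k set"
  assumes star: "star_operation D st"
begin

lemma star_frac_ideal: "frac_ideal D A \<Longrightarrow> frac_ideal D (st A)"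
  and star_extensive: "frac_ideal D A \<Longrightarrow> A \<subseteq> st A"
  and star_idem: "frac_ideal D A \<Longrightarrow> st (st A) = st A"
  and star_mono: "frac_ideal D A \<Longrightarrow> frac_ideal D B \<Longrightarrow> A \<subseteq> B \<Longrightarrow> st A \<subseteq> st B"
  and star_principal: "x \<noteq> 0 \<Longrightarrow> st (principal D x) = principal D x"
  and star_smult_set: "x \<noteq> 0 \<Longrightarrow> frac_ideal D A \<Longrightarrow> st (smult_set x A) = smult_set x (st A)"
  using star unfolding star_operation_def by blast+

lemma star_D: "st D = D"
  using star_principal[of 1] principal_one by simp

lemma star_submodule: "frac_ideal D A \<Longrightarrow> submodule D (st A)"
  by (simp add: frac_ideal_submodule star_frac_ideal)

lemma star_integral: "frac_ideal D A \<Longrightarrow> A \<subseteq> D \<Longrightarrow> st A \<subseteq> D"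
  using star_mono[OF _ frac_ideal_D] star_D by auto

lemma star_subset_star:
  assumes "frac_ideal D A" "frac_ideal D B" "A \<subseteq> st B"
  shows "st A \<subseteq> st B"
  using star_mono[OF assms(1) star_frac_ideal[OF assms(2)] assms(3)] star_idem[OF assms(2)] by simp

text \<open>The key point is \<open>(bA)\<^sup>* = b A\<^sup>*\<close>.\<close>

lemma star_idprod_star_left:
  assumes A: "frac_ideal D A" and B: "frac_ideal D B"
  shows "st (idprod (st A) B) = st (idprod A B)"
proof
  have AB: "frac_ideal D (idprod A B)"
    using A B by (rule frac_ideal_idprod)
  have "idprod (st A) B \<subseteq> st (idprod A B)"
  proof (rule idprod_subset_submodule[OF star_submodule[OF AB]])
    fix a b assume "a \<in> st A" "b \<in> B"
    show "a * b \<in> st (idprod A B)"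
    proof (cases "b = 0")
      case True
      then show ?thesis
        using frac_ideal_zero[OF star_frac_ideal[OF AB]] by simp
    next
      case False
      have "smult_set b A \<subseteq> idprod A B"
        unfolding smult_set_def using \<open>b \<in> B\<close> by (auto simp: mult.commute intro: mult_in_idprod)
      then have "st (smult_set b A) \<subseteq> st (idprod A B)"
        by (rule star_mono[OF frac_ideal_smult_set[OF A False] AB])
      moreover have "b * a \<in> st (smult_set b A)"
        using \<open>a \<in> st A\<close> star_smult_set[OF False A] unfolding smult_set_def by blast
      ultimately show ?thesis
        by (auto simp: mult.commute)
    qed
  qed
  then show "st (idprod (st A) B) \<subseteq> st (idprod A B)"
    using A B by (intro star_subset_star frac_ideal_idprod star_frac_ideal)
  show "st (idprod A B) \<subseteq> st (idprod (st A) B)"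
    using A B by (intro star_mono frac_ideal_idprod star_frac_ideal idprod_mono star_extensive order_refl)
qed

lemma star_idprod_star_right: "frac_ideal D A \<Longrightarrow> frac_ideal D B \<Longrightarrow> st (idprod A (st B)) = st (idprod A B)"
  using star_idprod_star_left[of B A] by (simp add: idprod_commute)

lemma star_idprod_star: "frac_ideal D A \<Longrightarrow> frac_ideal D B \<Longrightarrow> st (idprod (st A) (st B)) = st (idprod A B)"
  by (simp add: star_idprod_star_left star_idprod_star_right star_frac_ideal)

lemma star_idsum_star_left:
  assumes A: "frac_ideal D A" and B: "frac_ideal D B"
  shows "st (idsum (st A) B) = st (idsum A B)"
proof
  have AB: "frac_ideal D (idsum A B)"
    using A B by (rule frac_ideal_idsum)
  have "st A \<subseteq> st (idsum A B)"
    using A AB idsum_subset_left[OF frac_ideal_submodule[OF B]] by (rule star_mono)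
  moreover have "B \<subseteq> st (idsum A B)"
    using idsum_subset_right[OF frac_ideal_submodule[OF A]] star_extensive[OF AB] by blast
  ultimately have "idsum (st A) B \<subseteq> st (idsum A B)"
    by (rule idsum_least[OF star_submodule[OF AB]])
  then show "st (idsum (st A) B) \<subseteq> st (idsum A B)"
    using A B by (intro star_subset_star frac_ideal_idsum star_frac_ideal)
  show "st (idsum A B) \<subseteq> st (idsum (st A) B)"
    using A B by (intro star_mono frac_ideal_idsum star_frac_ideal idsum_mono star_extensive order_refl)
qed

lemma star_idsum_star_right: "frac_ideal D A \<Longrightarrow> frac_ideal D B \<Longrightarrow> st (idsum A (st B)) = st (idsum A B)"
  using star_idsum_star_left[of B A] by (simp add: idsum_commute)

lemma star_idsum_star: "frac_ideal D A \<Longrightarrow> frac_ideal D B \<Longrightarrow> st (idsum (st A) (st B)) = st (idsum A B)"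
  by (simp add: star_idsum_star_left star_idsum_star_right star_frac_ideal)

lemma subset_star_idsum_left:
  assumes "frac_ideal D A" "frac_ideal D B"
  shows "A \<subseteq> st (idsum A B)"
  using idsum_subset_left[OF frac_ideal_submodule[OF assms(2)]] star_extensive[OF frac_ideal_idsum[OF assms]]
  by (rule order.trans)

lemma subset_star_idsum_right:
  assumes "frac_ideal D A" "frac_ideal D B"
  shows "B \<subseteq> st (idsum A B)"
  using idsum_subset_right[OF frac_ideal_submodule[OF assms(1)]] star_extensive[OF frac_ideal_idsum[OF assms]]
  by (rule order.trans)

lemma star_idprod_list_map_star:
  "(\<And>A. A \<in> set As \<Longrightarrow> frac_ideal D A) \<Longrightarrow> st (idprod_list D (map st As)) = st (idprod_list D As)"
proof (induction As)
  case (Cons A As)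
  have A: "frac_ideal D A"
    using Cons.prems by simp
  have As: "frac_ideal D (idprod_list D As)"
    using Cons.prems by (intro frac_ideal_idprod_list) simp
  have As': "frac_ideal D (idprod_list D (map st As))"
    using Cons.prems by (intro frac_ideal_idprod_list) (auto intro: star_frac_ideal)
  have "st (idprod (st A) (idprod_list D (map st As))) = st (idprod A (st (idprod_list D (map st As))))"
    using A As' by (simp add: star_idprod_star_left star_idprod_star_right)
  also have "\<dots> = st (idprod A (idprod_list D As))"
    using Cons A As by (simp add: star_idprod_star_right)
  finally show ?case
    by (simp add: idprod_list_Cons)
qed (simp add: idprod_list_Nil)

lemma symp_star_comaximal: "symp (star_comaximal D st)"
  unfolding star_comaximal_def symp_def by (simp add: idsum_commute)

lemma star_comaximal_commute: "star_comaximal D st A B \<longleftrightarrow> star_comaximal D st B A"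
  unfolding star_comaximal_def by (simp add: idsum_commute)

lemma star_comaximal_mono:
  assumes "frac_ideal D A" "frac_ideal D B" "frac_ideal D A'" "frac_ideal D B'"
    and "A \<subseteq> A'" "B \<subseteq> B'" "A' \<subseteq> D" "B' \<subseteq> D" "star_comaximal D st A B"
  shows "star_comaximal D st A' B'"
proof -
  have "st (idsum A' B') \<subseteq> D"
    using assms by (intro star_integral frac_ideal_idsum idsum_integral)
  moreover have "st (idsum A B) \<subseteq> st (idsum A' B')"
    using assms by (intro star_mono frac_ideal_idsum idsum_mono)
  ultimately show ?thesis
    using assms(9) unfolding star_comaximal_def by blast
qed

lemma star_comaximal_idprod:
  assumes J: "frac_ideal D J" "J \<subseteq> D" and A: "frac_ideal D A" "A \<subseteq> D" and B: "frac_ideal D B" "B \<subseteq> D"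
    and "star_comaximal D st J A" "star_comaximal D st J B"
  shows "star_comaximal D st J (idprod A B)"
proof -
  have "D = st (idprod (st (idsum J A)) (st (idsum J B)))"
    using assms(7,8) idprod_D_left[OF submodule_D] star_D unfolding star_comaximal_def by simp
  also have "\<dots> = st (idprod (idsum J A) (idsum J B))"
    using J A B by (intro star_idprod_star frac_ideal_idsum)
  also have "\<dots> \<subseteq> st (idsum J (idprod A B))"
    using J A B
    by (intro star_mono frac_ideal_idsum frac_ideal_idprod idprod_idsum_subset frac_ideal_submodule)
  finally have "D \<subseteq> st (idsum J (idprod A B))" .
  moreover have "st (idsum J (idprod A B)) \<subseteq> D"
    using J A B by (intro star_integral frac_ideal_idsum frac_ideal_idprod idsum_integral idprod_integral)
  ultimately show ?thesis
    unfolding star_comaximal_def by blast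
qed

lemma star_comaximal_idprod_list:
  assumes J: "frac_ideal D J" "J \<subseteq> D"
    and "\<And>A. A \<in> set As \<Longrightarrow> frac_ideal D A \<and> A \<subseteq> D \<and> star_comaximal D st J A"
  shows "star_comaximal D st J (idprod_list D As)"
  using assms(3)
proof (induction As)
  case Nil
  have "idsum J D = D"
    using idsum_absorb[OF submodule_D J(2) frac_ideal_zero[OF J(1)]] by (simp add: idsum_commute)
  then show ?case
    unfolding star_comaximal_def by (simp add: idprod_list_Nil star_D)
next
  case (Cons A As)
  then show ?case
    using J by (simp add: idprod_list_Cons star_comaximal_idprod frac_ideal_idprod_list idprod_list_integral)
qed

lemma star_cancel:
  assumes A: "frac_ideal D A" "st A = A" and B: "frac_ideal D B" "B \<subseteq> D"
    and C: "frac_ideal D C" and BC: "idprod B C \<subseteq> A" and "star_comaximal D st A C"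
  shows "B \<subseteq> A"
proof -
  have "idprod B (idsum A C) \<subseteq> A"
  proof (rule idprod_subset_submodule[OF frac_ideal_submodule[OF A(1)]])
    fix b u assume "b \<in> B" "u \<in> idsum A C"
    then obtain a c where "u = a + c" "a \<in> A" "c \<in> C"
      unfolding idsum_def by blast
    moreover have "b * a \<in> A"
      using \<open>a \<in> A\<close> \<open>b \<in> B\<close> B(2) frac_ideal_submodule[OF A(1)] by (blast intro: submodule_mult)
    moreover have "b * c \<in> A"
      using \<open>b \<in> B\<close> \<open>c \<in> C\<close> BC mult_in_idprod by blast
    ultimately show "b * u \<in> A"
      using frac_ideal_submodule[OF A(1)] by (simp add: distrib_left submodule_add)
  qed
  have "B = idprod B (st (idsum A C))"
    using assms(7) idprod_D_right[OF frac_ideal_submodule[OF B(1)]] unfolding star_comaximal_def by simp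
  also have "\<dots> \<subseteq> st (idprod B (st (idsum A C)))"
    using A B C by (intro star_extensive frac_ideal_idprod star_frac_ideal frac_ideal_idsum)
  also have "\<dots> = st (idprod B (idsum A C))"
    using A B C by (intro star_idprod_star_right frac_ideal_idsum)
  also have "\<dots> \<subseteq> st A"
    using A B C \<open>idprod B (idsum A C) \<subseteq> A\<close> by (intro star_mono frac_ideal_idprod frac_ideal_idsum)
  finally show ?thesis
    using A(2) by simp
qed

lemma Int_subset_star_idprod:
  assumes A: "frac_ideal D A" "A \<subseteq> D" and B: "frac_ideal D B" "B \<subseteq> D"
    and "star_comaximal D st A B"
  shows "A \<inter> B \<subseteq> st (idprod A B)"
proof -
  have MA: "submodule D A" and MB: "submodule D B"
    using A(1) B(1) by (simp_all add: frac_ideal_submodule)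
  then have M: "submodule D (A \<inter> B)"
    by (rule submodule_Int)
  obtain a where "a \<in> A" "a \<noteq> 0"
    using A(1) by (rule frac_ideal_nonzero)
  obtain b where "b \<in> B" "b \<noteq> 0"
    using B(1) by (rule frac_ideal_nonzero)
  have "b * a \<in> A" "a * b \<in> B"
    using \<open>a \<in> A\<close> \<open>b \<in> B\<close> A(2) B(2) submodule_mult[OF MA] submodule_mult[OF MB] by blast+
  then have "a * b \<in> A \<inter> B" "a * b \<noteq> 0"
    using \<open>a \<noteq> 0\<close> \<open>b \<noteq> 0\<close> by (simp_all add: mult.commute)
  then have AB: "frac_ideal D (A \<inter> B)"
    using frac_ideal_integral[OF M] A(2) by blast
  have "idprod (A \<inter> B) (idsum A B) \<subseteq> idprod A B"
  proof (rule idprod_subset_submodule[OF submodule_idprod[OF MA]])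
    fix c u assume "c \<in> A \<inter> B" "u \<in> idsum A B"
    then obtain x y where "u = x + y" "x \<in> A" "y \<in> B"
      unfolding idsum_def by blast
    have "x * c \<in> idprod A B" "c * y \<in> idprod A B"
      using \<open>c \<in> A \<inter> B\<close> \<open>x \<in> A\<close> \<open>y \<in> B\<close> by (simp_all add: mult_in_idprod)
    then show "c * u \<in> idprod A B"
      unfolding \<open>u = x + y\<close> distrib_left by (simp add: mult.commute add_in_idprod)
  qed
  have ABs: "frac_ideal D (idsum A B)"
    using A(1) B(1) by (rule frac_ideal_idsum)
  have "A \<inter> B = idprod (A \<inter> B) (st (idsum A B))"
    using assms(5) idprod_D_right[OF M] unfolding star_comaximal_def by simp
  also have "\<dots> \<subseteq> st (idprod (A \<inter> B) (st (idsum A B)))"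
    by (rule star_extensive[OF frac_ideal_idprod[OF AB star_frac_ideal[OF ABs]]])
  also have "\<dots> = st (idprod (A \<inter> B) (idsum A B))"
    by (rule star_idprod_star_right[OF AB ABs])
  also have "\<dots> \<subseteq> st (idprod A B)"
    by (rule star_mono[OF frac_ideal_idprod[OF AB ABs] frac_ideal_idprod[OF A(1) B(1)]]) fact
  finally show ?thesis .
qed

lemma subset_star_idprod_list:
  assumes "\<And>A. A \<in> set As \<Longrightarrow> frac_ideal D A \<and> A \<subseteq> D \<and> I \<subseteq> A"
    and "pairwise_list (star_comaximal D st) As" and "I \<subseteq> D"
  shows "I \<subseteq> st (idprod_list D As)"
  using assms(1,2)
proof (induction As)
  case Nil
  then show ?case
    using assms(3) by (simp add: idprod_list_Nil star_D)
next
  case (Cons A As)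
  have A: "frac_ideal D A" "A \<subseteq> D" "I \<subseteq> A"
    using Cons.prems(1) by auto
  have As: "frac_ideal D (idprod_list D As)" "idprod_list D As \<subseteq> D"
    using Cons.prems(1) by (simp_all add: frac_ideal_idprod_list idprod_list_integral)
  have pw: "\<forall>B\<in>set As. star_comaximal D st A B" "pairwise_list (star_comaximal D st) As"
    using Cons.prems(2) by (simp_all add: pairwise_list_Cons[OF symp_star_comaximal])
  have "star_comaximal D st A (idprod_list D As)"
    using Cons.prems(1) pw(1) by (intro star_comaximal_idprod_list[OF A(1,2)]) simp
  then have comax: "star_comaximal D st A (st (idprod_list D As))"
    unfolding star_comaximal_def by (simp add: star_idsum_star_right A(1) As(1))
  have "I \<subseteq> A \<inter> st (idprod_list D As)"
    using Cons.IH Cons.prems(1) pw(2) A(3) by simp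
  also have "\<dots> \<subseteq> st (idprod A (st (idprod_list D As)))"
    by (rule Int_subset_star_idprod[OF A(1,2) star_frac_ideal[OF As(1)] star_integral[OF As] comax])
  also have "\<dots> = st (idprod_list D (A # As))"
    by (simp add: star_idprod_star_right A(1) As(1) idprod_list_Cons)
  finally show ?case .
qed

lemma star_idprod_list_subset_factor:
  assumes "J \<in> set As" "st J = J" and "\<And>A. A \<in> set As \<Longrightarrow> frac_ideal D A \<and> A \<subseteq> D"
  shows "st (idprod_list D As) \<subseteq> J"
proof -
  have J: "frac_ideal D J"
    using assms(1,3) by blast
  have As: "frac_ideal D (idprod_list D As)"
    using assms(3) by (simp add: frac_ideal_idprod_list)
  have "idprod_list D (remove1 J As) \<subseteq> D"
    by (rule idprod_list_integral) (meson assms(3) in_mono set_remove1_subset)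
  then have "idprod_list D As \<subseteq> idprod J D"
    unfolding idprod_list_remove1[OF assms(1)] by (rule idprod_mono[OF order_refl])
  also have "\<dots> = J"
    by (rule idprod_D_right[OF frac_ideal_submodule[OF J]])
  finally have "st (idprod_list D As) \<subseteq> st J"
    by (rule star_mono[OF As J])
  then show ?thesis
    using assms(2) by simp
qed

lemma finite_type_star_idsum:
  assumes "finite_type D st A" "finite_type D st B"
  shows "finite_type D st (st (idsum A B))"
proof -
  obtain S T where S: "finite S" "frac_ideal D (gen D S)" "A = st (gen D S)"
    and T: "finite T" "frac_ideal D (gen D T)" "B = st (gen D T)"
    using assms unfolding finite_type_def fin_gen_def by metis
  then have "st (idsum A B) = st (gen D (S \<union> T))"
    by (simp add: star_idsum_star idsum_gen)
  moreover have "frac_ideal D (gen D (S \<union> T))"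
    using S T by (metis frac_ideal_idsum idsum_gen)
  ultimately show ?thesis
    unfolding finite_type_def fin_gen_def using S T by blast
qed

lemma finite_type_star_idprod:
  assumes "finite_type D st A" "finite_type D st B"
  shows "finite_type D st (st (idprod A B))"
proof -
  obtain S T where S: "finite S" "frac_ideal D (gen D S)" "A = st (gen D S)"
    and T: "finite T" "frac_ideal D (gen D T)" "B = st (gen D T)"
    using assms unfolding finite_type_def fin_gen_def by metis
  let ?ST = "(\<lambda>(s, t). s * t) ` (S \<times> T)"
  have "st (idprod A B) = st (gen D ?ST)"
    using S T by (simp add: star_idprod_star idprod_gen)
  moreover have "frac_ideal D (gen D ?ST)"
    using S T by (metis frac_ideal_idprod idprod_gen)
  moreover have "finite ?ST"
    using S T by simp
  ultimately show ?thesis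
    unfolding finite_type_def fin_gen_def by blast
qed

section \<open>Homog ideals\<close>

lemma
  assumes "pift D st A"
  shows pift_frac_ideal: "frac_ideal D A" and pift_integral: "A \<subseteq> D"
    and pift_star: "st A = A" and pift_proper: "A \<noteq> D"
  using assms unfolding pift_def star_ideal_def by blast+

lemma pift_star_idsum:
  assumes "pift D st A" "pift D st B" "\<not> star_comaximal D st A B"
  shows "pift D st (st (idsum A B))"
proof -
  have "frac_ideal D (idsum A B)" "idsum A B \<subseteq> D"
    using assms by (simp_all add: frac_ideal_idsum idsum_integral pift_frac_ideal pift_integral)
  then show ?thesis
    using assms unfolding pift_def star_ideal_def star_comaximal_def
    by (simp add: star_frac_ideal star_idem star_integral finite_type_star_idsum)
qed

lemma pift_star_idprod:
  assumes A: "pift D st A" and B: "pift D st B"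
  shows "pift D st (st (idprod A B))" and "st (idprod A B) \<subseteq> A"
proof -
  have AB: "frac_ideal D (idprod A B)"
    using A B by (simp add: frac_ideal_idprod pift_frac_ideal)
  have "st (idprod A B) \<subseteq> st (idprod A D)"
    using A B AB by (intro star_mono idprod_mono frac_ideal_idprod frac_ideal_D pift_frac_ideal pift_integral) auto
  also have "\<dots> = A"
    using A by (simp add: idprod_D_right frac_ideal_submodule pift_frac_ideal pift_star)
  finally show "st (idprod A B) \<subseteq> A" .
  then show "pift D st (st (idprod A B))"
    using A B AB unfolding pift_def star_ideal_def
    by (auto simp: star_frac_ideal star_idem finite_type_star_idprod)
qed

lemma star_homog_pift: "star_homog D st H \<Longrightarrow> pift D st H"
  unfolding star_homog_def by blast

lemma star_homog_not_comaximal: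
  "star_homog D st H \<Longrightarrow> pift D st A \<Longrightarrow> pift D st B \<Longrightarrow> H \<subseteq> A \<Longrightarrow> H \<subseteq> B \<Longrightarrow>
    \<not> star_comaximal D st A B"
  by (simp add: star_homog_def star_comaximal_def)

lemma star_homog_not_self_comaximal: "star_homog D st H \<Longrightarrow> \<not> star_comaximal D st H H"
  by (rule star_homog_not_comaximal) (auto simp: star_homog_pift)

lemma star_homog_superset:
  assumes "star_homog D st H" "pift D st A" "H \<subseteq> A"
  shows "star_homog D st A"
  unfolding star_homog_def
proof (intro conjI allI impI)
  fix X Y assume "pift D st X \<and> pift D st Y \<and> A \<subseteq> X \<and> A \<subseteq> Y"
  then show "st (idsum X Y) \<noteq> D"
    using assms(1,3) star_homog_not_comaximal unfolding star_comaximal_def by blast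
qed (rule assms(2))

lemma star_homog_comaximal_disj:
  assumes H: "star_homog D st H" and A: "pift D st A" and B: "pift D st B"
    and "star_comaximal D st A B"
  shows "star_comaximal D st H A \<or> star_comaximal D st H B"
proof (rule ccontr)
  assume "\<not> ?thesis"
  then have HA: "pift D st (st (idsum H A))" and HB: "pift D st (st (idsum H B))"
    using star_homog_pift[OF H] A B by (simp_all add: pift_star_idsum)
  have fr: "frac_ideal D H" "frac_ideal D A" "frac_ideal D B"
    using star_homog_pift[OF H] A B by (simp_all add: pift_frac_ideal)
  have "star_comaximal D st (st (idsum H A)) (st (idsum H B))"
  proof (rule star_comaximal_mono[OF fr(2,3)])
    show "A \<subseteq> st (idsum H A)" "B \<subseteq> st (idsum H B)"
      using fr by (simp_all add: subset_star_idsum_right)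
  qed (use HA HB assms(4) in \<open>simp_all add: pift_frac_ideal pift_integral\<close>)
  moreover have "\<not> star_comaximal D st (st (idsum H A)) (st (idsum H B))"
    using fr by (intro star_homog_not_comaximal[OF H HA HB]) (simp_all add: subset_star_idsum_left)
  ultimately show False
    by contradiction
qed

text \<open>\<open>E = (X + (H + H')\<^sup>*)\<^sup>*\<close> is proper because \<open>H\<close> lies in both summands, and it contains \<open>X\<close>
  and \<open>H'\<close>; so \<open>(E + Y)\<^sup>* \<noteq> D\<close> as \<open>H' \<subseteq> Y\<close>, whereas \<open>(X + Y)\<^sup>* = D\<close>.\<close>

lemma star_homog_pair_not_comaximal_mixed:
  assumes H: "star_homog D st H" and H': "star_homog D st H'" and "\<not> star_comaximal D st H H'"
    and X: "pift D st X" "H \<subseteq> X" and Y: "pift D st Y" "H' \<subseteq> Y"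
  shows "\<not> star_comaximal D st X Y"
proof
  assume XY: "star_comaximal D st X Y"
  have fH: "frac_ideal D H" and fH': "frac_ideal D H'"
    using H H' by (simp_all add: star_homog_pift pift_frac_ideal)
  define C where "C = st (idsum H H')"
  have C: "pift D st C"
    unfolding C_def using pift_star_idsum[OF star_homog_pift[OF H] star_homog_pift[OF H'] assms(3)] .
  have "H \<subseteq> C" "H' \<subseteq> C"
    unfolding C_def using fH fH' by (simp_all add: subset_star_idsum_left subset_star_idsum_right)
  define E where "E = st (idsum X C)"
  have "\<not> star_comaximal D st X C"
    using star_homog_not_comaximal[OF H X(1) C X(2) \<open>H \<subseteq> C\<close>] .
  then have E: "pift D st E"
    unfolding E_def using pift_star_idsum[OF X(1) C] by simp
  have "X \<subseteq> E" "C \<subseteq> E"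
    unfolding E_def using pift_frac_ideal[OF X(1)] pift_frac_ideal[OF C]
    by (simp_all add: subset_star_idsum_left subset_star_idsum_right)
  have "\<not> star_comaximal D st E Y"
    using star_homog_not_comaximal[OF H' E Y(1)] \<open>H' \<subseteq> C\<close> \<open>C \<subseteq> E\<close> Y(2) by blast
  moreover have "star_comaximal D st E Y"
    by (rule star_comaximal_mono[OF pift_frac_ideal[OF X(1)] pift_frac_ideal[OF Y(1)]
          pift_frac_ideal[OF E] pift_frac_ideal[OF Y(1)] \<open>X \<subseteq> E\<close> order_refl
          pift_integral[OF E] pift_integral[OF Y(1)] XY])
  ultimately show False
    by contradiction
qed

lemma star_homog_pair_not_comaximal:
  assumes H: "star_homog D st H" and H': "star_homog D st H'" and HH': "\<not> star_comaximal D st H H'"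
    and X: "pift D st X" "H \<subseteq> X \<or> H' \<subseteq> X" and Y: "pift D st Y" "H \<subseteq> Y \<or> H' \<subseteq> Y"
  shows "\<not> star_comaximal D st X Y"
proof -
  consider "H \<subseteq> X" "H \<subseteq> Y" | "H \<subseteq> X" "H' \<subseteq> Y" | "H' \<subseteq> X" "H \<subseteq> Y" | "H' \<subseteq> X" "H' \<subseteq> Y"
    using X(2) Y(2) by blast
  then show ?thesis
  proof cases
    case 1
    then show ?thesis
      by (rule star_homog_not_comaximal[OF H X(1) Y(1)])
  next
    case 2
    then show ?thesis
      by (rule star_homog_pair_not_comaximal_mixed[OF H H' HH' X(1) _ Y(1)])
  next
    case 3
    then have "\<not> star_comaximal D st Y X"
      by (intro star_homog_pair_not_comaximal_mixed[OF H H' HH' Y(1) _ X(1)])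
    then show ?thesis
      using star_comaximal_commute by blast
  next
    case 4
    then show ?thesis
      by (rule star_homog_not_comaximal[OF H' X(1) Y(1)])
  qed
qed

lemma pift_above_idprod:
  assumes H: "pift D st H" and H': "pift D st H'"
    and A: "pift D st A" "idprod H H' \<subseteq> A"
  obtains A' where "pift D st A'" "A \<subseteq> A'" "H \<subseteq> A' \<or> H' \<subseteq> A'"
proof (cases "star_comaximal D st A H")
  case True
  have "idprod H' H \<subseteq> A"
    using A(2) by (simp add: idprod_commute)
  then have "H' \<subseteq> A"
    by (rule star_cancel[OF pift_frac_ideal[OF A(1)] pift_star[OF A(1)] pift_frac_ideal[OF H']
          pift_integral[OF H'] pift_frac_ideal[OF H] _ True])
  then show ?thesis
    using that[OF A(1)] by blast
next
  case False
  have "A \<subseteq> st (idsum A H)" "H \<subseteq> st (idsum A H)"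
    using pift_frac_ideal[OF A(1)] pift_frac_ideal[OF H]
    by (simp_all add: subset_star_idsum_left subset_star_idsum_right)
  then show ?thesis
    using that[OF pift_star_idsum[OF A(1) H False]] by blast
qed

lemma star_homog_star_idprod:
  assumes H: "star_homog D st H" and H': "star_homog D st H'" and HH': "\<not> star_comaximal D st H H'"
  shows "star_homog D st (st (idprod H H'))"
  unfolding star_homog_def
proof (intro conjI allI impI notI)
  let ?P = "st (idprod H H')"
  have pH: "pift D st H" and pH': "pift D st H'"
    using H H' by (simp_all add: star_homog_pift)
  show "pift D st ?P"
    using pH pH' by (rule pift_star_idprod)
  have "idprod H H' \<subseteq> ?P"
    using pH pH' by (simp add: star_extensive frac_ideal_idprod pift_frac_ideal)
  fix A B
  assume "pift D st A \<and> pift D st B \<and> ?P \<subseteq> A \<and> ?P \<subseteq> B" and AB: "st (idsum A B) = D"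
  then have A: "pift D st A" "idprod H H' \<subseteq> A" and B: "pift D st B" "idprod H H' \<subseteq> B"
    using \<open>idprod H H' \<subseteq> ?P\<close> by auto
  obtain A' where A': "pift D st A'" "A \<subseteq> A'" "H \<subseteq> A' \<or> H' \<subseteq> A'"
    using pift_above_idprod[OF pH pH' A] .
  obtain B' where B': "pift D st B'" "B \<subseteq> B'" "H \<subseteq> B' \<or> H' \<subseteq> B'"
    using pift_above_idprod[OF pH pH' B] .
  have "star_comaximal D st A' B'"
    using AB unfolding star_comaximal_def[symmetric]
    by (rule star_comaximal_mono[OF pift_frac_ideal[OF A(1)] pift_frac_ideal[OF B(1)]
          pift_frac_ideal[OF A'(1)] pift_frac_ideal[OF B'(1)] A'(2) B'(2)
          pift_integral[OF A'(1)] pift_integral[OF B'(1)]])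
  then show False
    using star_homog_pair_not_comaximal[OF H H' HH' A'(1,3) B'(1,3)] by contradiction
qed

section \<open>Factorization into mutually comaximal homog ideals\<close>

lemma exists_comaximal_regrouping:
  assumes "\<And>H. H \<in> set Hs \<Longrightarrow> star_homog D st H"
  shows "\<exists>Ks. (\<forall>K\<in>set Ks. star_homog D st K) \<and> pairwise_list (star_comaximal D st) Ks \<and>
    st (idprod_list D Ks) = st (idprod_list D Hs)"
  using assms
proof (induction "length Hs" arbitrary: Hs rule: less_induct)
  case less
  show ?case
  proof (cases "pairwise_list (star_comaximal D st) Hs")
    case True
    with less.prems show ?thesis
      by blast
  next
    case False
    then obtain H H' where HH': "H \<in> set Hs" "H' \<in> set (remove1 H Hs)" "\<not> star_comaximal D st H H'"
      unfolding pairwise_list_iff_remove1[OF symp_star_comaximal] by blast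
    define Rest where "Rest = remove1 H' (remove1 H Hs)"
    have remove1_mset: "mset xs = add_mset x (mset (remove1 x xs))" if "x \<in> set xs" for x and xs :: "'k set list"
      using that by simp
    have "mset Hs = add_mset H (add_mset H' (mset Rest))"
      unfolding Rest_def using remove1_mset[OF HH'(1)] remove1_mset[OF HH'(2)] by simp
    then have mset_Hs: "mset Hs = mset (H # H' # Rest)"
      by simp
    then have "set Hs = insert H (insert H' (set Rest))"
      using mset_eq_setD[OF mset_Hs] by simp
    then have Rest: "\<And>K. K \<in> set Rest \<Longrightarrow> star_homog D st K" and H: "star_homog D st H" "star_homog D st H'"
      using less.prems by auto
    have fr: "frac_ideal D H" "frac_ideal D H'" "frac_ideal D (idprod_list D Rest)"
      using H Rest by (simp_all add: frac_ideal_idprod_list star_homog_pift pift_frac_ideal)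
    let ?New = "st (idprod H H') # Rest"
    have "length ?New < length Hs"
      using arg_cong[OF mset_Hs, of size] by simp
    moreover have "\<And>K. K \<in> set ?New \<Longrightarrow> star_homog D st K"
      using star_homog_star_idprod[OF H HH'(3)] Rest by auto
    moreover have "st (idprod_list D ?New) = st (idprod_list D Hs)"
    proof -
      have "st (idprod_list D ?New) = st (idprod (idprod H H') (idprod_list D Rest))"
        using fr by (simp add: idprod_list_Cons star_idprod_star_left frac_ideal_idprod)
      also have "\<dots> = st (idprod_list D Hs)"
        using idprod_list_mset_eq[OF mset_Hs] by (simp add: idprod_list_Cons idprod_assoc)
      finally show ?thesis .
    qed
    ultimately show ?thesis
      using less.hyps[of ?New] by auto
  qed
qed

lemma star_SH_comaximal_factorization:
  assumes "star_SH D st" "x \<in> D" "x \<noteq> 0" "inverse x \<notin> D"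
  obtains Ks where "\<forall>K\<in>set Ks. star_homog D st K" "pairwise_list (star_comaximal D st) Ks"
    "st (idprod_list D Ks) = principal D x"
proof -
  obtain Hs where "\<forall>H\<in>set Hs. star_homog D st H" "principal D x = st (idprod_list D Hs)"
    using assms unfolding star_SH_def by blast
  then show ?thesis
    using that exists_comaximal_regrouping[of Hs] by auto
qed

lemma subset_star_if_star_idprod_idinv:
  assumes I: "frac_ideal D I" and A: "frac_ideal D A" "A \<subseteq> I"
    and AI: "st (idprod A (idinv D I)) = D"
  shows "I \<subseteq> st A"
proof -
  have Iv: "frac_ideal D (idinv D I)" and AIv: "frac_ideal D (idprod A (idinv D I))"
    using I A by (simp_all add: frac_ideal_idinv frac_ideal_idprod)
  have "I = idprod I (st (idprod A (idinv D I)))"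
    using AI idprod_D_right[OF frac_ideal_submodule[OF I]] by simp
  also have "\<dots> \<subseteq> st (idprod I (idprod A (idinv D I)))"
    using star_extensive[OF frac_ideal_idprod[OF I star_frac_ideal[OF AIv]]] star_idprod_star_right[OF I AIv]
    by simp
  also have "idprod I (idprod A (idinv D I)) = idprod A (idprod I (idinv D I))"
    by (rule idprod_left_commute)
  also have "st \<dots> \<subseteq> st (idprod A D)"
    using I A Iv frac_ideal_D
    by (intro star_mono frac_ideal_idprod idprod_mono[OF order_refl idprod_idinv_integral])
  also have "\<dots> = st A"
    using A by (simp add: idprod_D_right frac_ideal_submodule)
  finally show ?thesis .
qed

lemma finite_type_if_star_invertible:
  assumes fc: "finite_character D st" and inv: "star_invertible D st I" and "st I = I"
  shows "finite_type D st I"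
proof -
  let ?Iv = "idinv D I"
  have I: "frac_ideal D I"
    using inv unfolding star_invertible_def by blast
  have Iv: "frac_ideal D ?Iv"
    using I by (rule frac_ideal_idinv)
  have "1 \<in> st (idprod I ?Iv)"
    using inv one_in_D unfolding star_invertible_def by simp
  moreover have "st (idprod I ?Iv) = \<Union>{st J | J. frac_ideal D J \<and> fin_gen D J \<and> J \<subseteq> idprod I ?Iv}"
    using fc frac_ideal_idprod[OF I Iv] unfolding finite_character_def by simp
  ultimately obtain J where J: "frac_ideal D J" "fin_gen D J" "J \<subseteq> idprod I ?Iv" "1 \<in> st J"
    by auto
  then obtain S where "finite S" "J = gen D S"
    unfolding fin_gen_def by blast
  then have "S \<subseteq> idprod I ?Iv"
    using J(3) gen_mem by blast
  with \<open>finite S\<close> obtain F where F: "finite F" "F \<subseteq> I" "J \<subseteq> idprod (gen D F) ?Iv"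
    unfolding \<open>J = gen D S\<close> by (rule gen_subset_idprod_finite_support)
  let ?I0 = "gen D F"
  have "?I0 \<subseteq> I"
    using F(2) by (rule gen_least[OF frac_ideal_submodule[OF I]])
  moreover have "?I0 \<noteq> {0}"
  proof
    assume "?I0 = {0}"
    then have "idprod ?I0 ?Iv \<subseteq> {0}"
      by (intro idprod_least) auto
    then show False
      using F(3) J(1) unfolding frac_ideal_def by blast
  qed
  ultimately have I0: "frac_ideal D ?I0"
    by (rule frac_ideal_subset[OF I gen_submodule])
  have "st (idprod ?I0 ?Iv) = D"
  proof
    have "idprod ?I0 ?Iv \<subseteq> idprod I ?Iv"
      using \<open>?I0 \<subseteq> I\<close> by (rule idprod_mono[OF _ order_refl])
    then show "st (idprod ?I0 ?Iv) \<subseteq> D"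
      using idprod_idinv_integral by (intro star_integral frac_ideal_idprod I0 Iv) blast
    have "1 \<in> st (idprod ?I0 ?Iv)"
      using J(4) star_mono[OF J(1) frac_ideal_idprod[OF I0 Iv] F(3)] by blast
    then show "D \<subseteq> st (idprod ?I0 ?Iv)"
      using principal_subset[OF star_submodule[OF frac_ideal_idprod[OF I0 Iv]]] principal_one by blast
  qed
  then have "I \<subseteq> st ?I0"
    by (rule subset_star_if_star_idprod_idinv[OF I I0 \<open>?I0 \<subseteq> I\<close>])
  moreover have "st ?I0 \<subseteq> I"
    using star_mono[OF I0 I \<open>?I0 \<subseteq> I\<close>] \<open>st I = I\<close> by simp
  ultimately show ?thesis
    unfolding finite_type_def fin_gen_def using I0 F(1) by blast
qed

lemma inverse_notin_if_proper:
  assumes "submodule D I" "I \<subseteq> D" "I \<noteq> D" "x \<in> I" "x \<noteq> 0"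
  shows "inverse x \<notin> D"
proof
  assume "inverse x \<in> D"
  then have "1 \<in> I"
    using assms(1,4,5) submodule_mult by fastforce
  then have "D \<subseteq> I"
    using principal_subset[OF assms(1)] principal_one by blast
  with assms(2,3) show False
    by blast
qed

lemma star_idprod_list_map_star_idsum_subset:
  assumes I: "frac_ideal D I" "I \<subseteq> D" "st I = I"
    and Ks: "\<And>K. K \<in> set Ks \<Longrightarrow> frac_ideal D K \<and> K \<subseteq> D" and "st (idprod_list D Ks) \<subseteq> I"
  shows "st (idprod_list D (map (\<lambda>K. st (idsum I K)) Ks)) \<subseteq> I"
proof -
  have fr: "\<And>A. A \<in> set (map (idsum I) Ks) \<Longrightarrow> frac_ideal D A"
    using I Ks by (auto intro: frac_ideal_idsum)
  have Ks': "frac_ideal D (idprod_list D Ks)"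
    using Ks by (simp add: frac_ideal_idprod_list)
  have "st (idprod_list D (map (\<lambda>K. st (idsum I K)) Ks)) = st (idprod_list D (map (idsum I) Ks))"
    using star_idprod_list_map_star[of "map (idsum I) Ks", OF fr] by (simp add: comp_def)
  also have "\<dots> \<subseteq> st (idsum I (idprod_list D Ks))"
  proof (rule star_mono)
    show "frac_ideal D (idprod_list D (map (idsum I) Ks))"
      using fr by (rule frac_ideal_idprod_list)
    show "frac_ideal D (idsum I (idprod_list D Ks))"
      using I(1) Ks' by (rule frac_ideal_idsum)
    show "idprod_list D (map (idsum I) Ks) \<subseteq> idsum I (idprod_list D Ks)"
      using Ks frac_ideal_submodule by (intro idprod_list_map_idsum_subset[OF frac_ideal_submodule[OF I(1)] I(2)]) blast
  qed
  also have "\<dots> = st (idsum I (st (idprod_list D Ks)))"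
    using I(1) Ks' by (simp add: star_idsum_star_right)
  also have "idsum I (st (idprod_list D Ks)) = I"
    using assms(5) frac_ideal_zero[OF star_frac_ideal[OF Ks']]
    by (rule idsum_absorb[OF frac_ideal_submodule[OF I(1)]])
  finally show ?thesis
    using I(3) by simp
qed

lemma homog_comaximal_factorization_if_contains_product:
  assumes I: "pift D st I"
    and Ks: "\<forall>K\<in>set Ks. star_homog D st K" "pairwise_list (star_comaximal D st) Ks"
    and "st (idprod_list D Ks) \<subseteq> I"
  obtains Is where "\<forall>J\<in>set Is. star_homog D st J" "pairwise_list (star_comaximal D st) Is"
    "I = st (idprod_list D Is)"
proof -
  have pK: "pift D st K" if "K \<in> set Ks" for K
    using Ks(1) that by (simp add: star_homog_pift)
  have fI: "frac_ideal D I"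
    using I by (rule pift_frac_ideal)
  define f where "f K = st (idsum I K)" for K
  define Is where "Is = filter (\<lambda>A. A \<noteq> D) (map f Ks)"
  have factor: "frac_ideal D P \<and> P \<subseteq> D \<and> I \<subseteq> P" if P: "P \<in> set (map f Ks)" for P
  proof -
    obtain K where K: "K \<in> set Ks" "P = f K"
      using P by auto
    have "frac_ideal D (idsum I K)" "idsum I K \<subseteq> D"
      using fI pK[OF K(1)] pift_integral[OF I]
      by (simp_all add: frac_ideal_idsum idsum_integral pift_frac_ideal pift_integral)
    then show ?thesis
      unfolding K(2) f_def using fI pK[OF K(1)]
      by (simp add: star_frac_ideal star_integral subset_star_idsum_left pift_frac_ideal)
  qed
  have K_subset: "K \<subseteq> f K" if "K \<in> set Ks" for K
    unfolding f_def using fI pK[OF that] by (simp add: subset_star_idsum_right pift_frac_ideal)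
  have homog: "star_homog D st P" if P: "P \<in> set Is" for P
  proof -
    obtain K where K: "K \<in> set Ks" "P = f K" "P \<noteq> D"
      using P unfolding Is_def by auto
    then have "pift D st P"
      using pift_star_idsum[OF I pK[OF K(1)]] unfolding f_def star_comaximal_def by auto
    then show ?thesis
      using star_homog_superset Ks(1) K K_subset by blast
  qed
  have "pairwise_list (star_comaximal D st) (map f Ks)"
    using Ks(2)
  proof (rule pairwise_list_map)
    fix K K' assume K: "K \<in> set Ks" "K' \<in> set Ks" "star_comaximal D st K K'"
    have "frac_ideal D (f K) \<and> f K \<subseteq> D" "frac_ideal D (f K') \<and> f K' \<subseteq> D"
      using factor K(1,2) by simp_all
    then show "star_comaximal D st (f K) (f K')"
      using star_comaximal_mono[OF pift_frac_ideal[OF pK[OF K(1)]] pift_frac_ideal[OF pK[OF K(2)]]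
          _ _ K_subset[OF K(1)] K_subset[OF K(2)] _ _ K(3)] by blast
  qed
  then have pw: "pairwise_list (star_comaximal D st) Is"
    unfolding Is_def by (rule pairwise_list_filter[OF symp_star_comaximal])
  have "I \<subseteq> st (idprod_list D Is)"
  proof (rule subset_star_idprod_list[OF _ pw pift_integral[OF I]])
    fix A assume "A \<in> set Is"
    then show "frac_ideal D A \<and> A \<subseteq> D \<and> I \<subseteq> A"
      using factor unfolding Is_def by simp
  qed
  moreover have "st (idprod_list D Is) \<subseteq> I"
    unfolding Is_def idprod_list_filter_D f_def
  proof (rule star_idprod_list_map_star_idsum_subset[OF fI pift_integral[OF I] pift_star[OF I] _ assms(4)])
    fix K assume "K \<in> set Ks"
    then show "frac_ideal D K \<and> K \<subseteq> D"
      using pK pift_frac_ideal pift_integral by blast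
  qed
  ultimately show ?thesis
    using that homog pw by blast
qed

lemma homog_comax_factorization_iff:
  "homog_comax_factorization D st I Is \<longleftrightarrow>
    (\<forall>J\<in>set Is. star_homog D st J) \<and> pairwise_list (star_comaximal D st) Is \<and> I = st (idprod_list D Is)"
  unfolding homog_comax_factorization_def pairwise_list_def by blast

lemma homog_comax_factorization_exists:
  assumes "finite_character D st" "star_SH D st"
    and I: "star_ideal D st I" "I \<subseteq> D" "I \<noteq> D" and "star_invertible D st I"
  obtains Is where "homog_comax_factorization D st I Is"
proof -
  have "frac_ideal D I" "st I = I"
    using I(1) unfolding star_ideal_def by simp_all
  then have pI: "pift D st I"
    using I assms(1,6) finite_type_if_star_invertible unfolding pift_def by blast
  obtain x where x: "x \<in> I" "x \<noteq> 0"
    using \<open>frac_ideal D I\<close> by (rule frac_ideal_nonzero)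
  then have "inverse x \<notin> D"
    using I(2,3) frac_ideal_submodule[OF \<open>frac_ideal D I\<close>] by (intro inverse_notin_if_proper)
  then obtain Ks where Ks: "\<forall>K\<in>set Ks. star_homog D st K" "pairwise_list (star_comaximal D st) Ks"
    "st (idprod_list D Ks) = principal D x"
    using star_SH_comaximal_factorization[OF assms(2)] x I(2) by blast
  moreover have "principal D x \<subseteq> I"
    using frac_ideal_submodule[OF \<open>frac_ideal D I\<close>] x(1) by (rule principal_subset)
  ultimately have "st (idprod_list D Ks) \<subseteq> I"
    by simp
  then obtain Is where "\<forall>J\<in>set Is. star_homog D st J" "pairwise_list (star_comaximal D st) Is"
    "I = st (idprod_list D Is)"
    by (rule homog_comaximal_factorization_if_contains_product[OF pI Ks(1,2)])
  then show ?thesis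
    using that unfolding homog_comax_factorization_iff by blast
qed

section \<open>Uniqueness\<close>

lemma exists_noncomaximal_factor:
  assumes J: "pift D st J" and Ks: "\<And>K. K \<in> set Ks \<Longrightarrow> frac_ideal D K \<and> K \<subseteq> D"
    and "st (idprod_list D Ks) \<subseteq> J"
  shows "\<exists>K\<in>set Ks. \<not> star_comaximal D st J K"
proof (rule ccontr)
  assume "\<not> ?thesis"
  then have "star_comaximal D st J (idprod_list D Ks)"
    using Ks by (intro star_comaximal_idprod_list[OF pift_frac_ideal[OF J] pift_integral[OF J]]) auto
  moreover have fKs: "frac_ideal D (idprod_list D Ks)"
    using Ks by (simp add: frac_ideal_idprod_list)
  moreover have "idprod D (idprod_list D Ks) \<subseteq> J"
    using star_extensive[OF fKs] assms(3) by (simp add: idprod_D_left submodule_idprod_list)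
  ultimately have "D \<subseteq> J"
    by (intro star_cancel[OF pift_frac_ideal[OF J] pift_star[OF J] frac_ideal_D order_refl])
  then show False
    using pift_integral[OF J] pift_proper[OF J] by blast
qed

lemma comaximal_to_other_factors:
  assumes J: "star_homog D st J" and Ks: "\<forall>K\<in>set Ks. pift D st K" "pairwise_list (star_comaximal D st) Ks"
    and K: "K \<in> set Ks" "\<not> star_comaximal D st J K" and K': "K' \<in> set (remove1 K Ks)"
  shows "star_comaximal D st J K'"
proof -
  have "star_comaximal D st K K'"
    using Ks(2) K(1) K' unfolding pairwise_list_iff_remove1[OF symp_star_comaximal] by blast
  moreover have "K' \<in> set Ks"
    using K' set_remove1_subset by fast
  ultimately show ?thesis
    using star_homog_comaximal_disj[OF J] Ks(1) K by blast
qed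

lemma noncomaximal_factor_subset:
  assumes J: "pift D st J" and Ks: "\<And>K. K \<in> set Ks \<Longrightarrow> frac_ideal D K \<and> K \<subseteq> D"
    and "st (idprod_list D Ks) \<subseteq> J" and K: "K \<in> set Ks"
    and "\<And>K'. K' \<in> set (remove1 K Ks) \<Longrightarrow> star_comaximal D st J K'"
  shows "K \<subseteq> J"
proof -
  let ?R = "idprod_list D (remove1 K Ks)"
  have R: "frac_ideal D K' \<and> K' \<subseteq> D" if "K' \<in> set (remove1 K Ks)" for K'
    by (rule Ks[OF subsetD[OF set_remove1_subset that]])
  then have fR: "frac_ideal D ?R"
    by (simp add: frac_ideal_idprod_list)
  have "star_comaximal D st J ?R"
    using R assms(5) by (intro star_comaximal_idprod_list[OF pift_frac_ideal[OF J] pift_integral[OF J]]) simp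
  moreover have "idprod K ?R \<subseteq> J"
  proof -
    have "frac_ideal D (idprod_list D Ks)"
      using Ks by (simp add: frac_ideal_idprod_list)
    then have "idprod_list D Ks \<subseteq> J"
      using assms(3) by (blast dest: star_extensive)
    then show ?thesis
      unfolding idprod_list_remove1[OF K] .
  qed
  ultimately show ?thesis
    using star_cancel[OF pift_frac_ideal[OF J] pift_star[OF J] conjunct1[OF Ks[OF K]] conjunct2[OF Ks[OF K]] fR]
    by blast
qed

lemma star_homog_contains_unique_factor:
  assumes J: "star_homog D st J" and Ks: "\<forall>K\<in>set Ks. star_homog D st K" "pairwise_list (star_comaximal D st) Ks"
    and "st (idprod_list D Ks) \<subseteq> J"
  obtains K where "K \<in> set Ks" "K \<subseteq> J" "\<And>K'. K' \<in> set Ks \<Longrightarrow> \<not> star_comaximal D st J K' \<Longrightarrow> K' = K"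
proof -
  have pK: "\<forall>K\<in>set Ks. pift D st K"
    using Ks(1) by (simp add: star_homog_pift)
  have fK: "\<And>K. K \<in> set Ks \<Longrightarrow> frac_ideal D K \<and> K \<subseteq> D"
    using pK pift_frac_ideal pift_integral by blast
  obtain K where K: "K \<in> set Ks" "\<not> star_comaximal D st J K"
    using exists_noncomaximal_factor[OF star_homog_pift[OF J] fK assms(4)] by blast
  have others: "\<And>K'. K' \<in> set (remove1 K Ks) \<Longrightarrow> star_comaximal D st J K'"
    by (rule comaximal_to_other_factors[OF J pK Ks(2) K])
  have "K \<subseteq> J"
    by (rule noncomaximal_factor_subset[OF star_homog_pift[OF J] fK assms(4) K(1) others])
  moreover have "K' = K" if "K' \<in> set Ks" "\<not> star_comaximal D st J K'" for K'
  proof (rule ccontr)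
    assume "K' \<noteq> K"
    then have "K' \<in> set (remove1 K Ks)"
      using \<open>K' \<in> set Ks\<close> by simp
    then show False
      using others \<open>\<not> star_comaximal D st J K'\<close> by blast
  qed
  ultimately show ?thesis
    by (rule that[OF K(1)])
qed

lemma set_subset_if_star_idprod_list_eq:
  assumes Is: "\<forall>K\<in>set Is. star_homog D st K" "pairwise_list (star_comaximal D st) Is"
    and Js: "\<forall>K\<in>set Js. star_homog D st K" "pairwise_list (star_comaximal D st) Js"
    and eq: "st (idprod_list D Is) = st (idprod_list D Js)"
  shows "set Is \<subseteq> set Js"
proof
  fix J assume J: "J \<in> set Is"
  have fr: "\<And>K. K \<in> set Is \<Longrightarrow> frac_ideal D K \<and> K \<subseteq> D" "\<And>K. K \<in> set Js \<Longrightarrow> frac_ideal D K \<and> K \<subseteq> D"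
    using Is(1) Js(1) by (simp_all add: star_homog_pift pift_frac_ideal pift_integral)
  have hJ: "star_homog D st J"
    using Is(1) J by blast
  have "st (idprod_list D Js) \<subseteq> J"
    using star_idprod_list_subset_factor[OF J pift_star[OF star_homog_pift[OF hJ]] fr(1)] eq by simp
  then obtain K where K: "K \<in> set Js" "K \<subseteq> J"
    by (rule star_homog_contains_unique_factor[OF hJ Js])
  have hK: "star_homog D st K"
    using Js(1) K(1) by blast
  have "st (idprod_list D Is) \<subseteq> K"
    using star_idprod_list_subset_factor[OF K(1) pift_star[OF star_homog_pift[OF hK]] fr(2)] eq by simp
  then obtain J' where J': "J' \<in> set Is" "J' \<subseteq> K" "\<And>K'. K' \<in> set Is \<Longrightarrow> \<not> star_comaximal D st K K' \<Longrightarrow> K' = J'"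
    by (rule star_homog_contains_unique_factor[OF hK Is]) blast
  have "\<not> star_comaximal D st K J"
    using star_homog_not_comaximal[OF hK star_homog_pift[OF hK] star_homog_pift[OF hJ] order_refl K(2)] .
  then have "J = J'"
    by (rule J'(3)[OF J])
  with J'(2) K(2) have "J = K"
    by blast
  with K(1) show "J \<in> set Js"
    by simp
qed

lemma distinct_if_homog_comaximal:
  "\<forall>K\<in>set Ks. star_homog D st K \<Longrightarrow> pairwise_list (star_comaximal D st) Ks \<Longrightarrow> distinct Ks"
  by (erule pairwise_list_distinct) (simp add: star_homog_not_self_comaximal)

lemma homog_comax_factorization_unique:
  assumes "homog_comax_factorization D st I Is" "homog_comax_factorization D st I Js"
  shows "mset Js = mset Is"
proof -
  have Is: "\<forall>K\<in>set Is. star_homog D st K" "pairwise_list (star_comaximal D st) Is" "I = st (idprod_list D Is)"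
    and Js: "\<forall>K\<in>set Js. star_homog D st K" "pairwise_list (star_comaximal D st) Js" "I = st (idprod_list D Js)"
    using assms unfolding homog_comax_factorization_iff by blast+
  have "set Js = set Is"
    using set_subset_if_star_idprod_list_eq[OF Is(1,2) Js(1,2)] set_subset_if_star_idprod_list_eq[OF Js(1,2) Is(1,2)]
      Is(3) Js(3) by simp
  then show ?thesis
    using distinct_if_homog_comaximal[OF Is(1,2)] distinct_if_homog_comaximal[OF Js(1,2)]
    by (simp add: set_eq_iff_mset_eq_distinct)
qed

end

theorem mainTheorem16:
  fixes D :: "'k::field set" and st :: "'k set \<Rightarrow> 'k set" and I :: "'k set"
  assumes "is_domain_in D"
    and "star_operation D st" and "finite_character D st"
    and "star_SH D st"
    and "star_ideal D st I" and "I \<subseteq> D" and "I \<noteq> D" and "star_invertible D st I"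
  shows "\<exists>Is. homog_comax_factorization D st I Is \<and>
           (\<forall>Js. homog_comax_factorization D st I Js \<longrightarrow> mset Js = mset Is)"
proof -
  interpret star_domain D st
    using assms(1,2) by unfold_locales
  obtain Is where "homog_comax_factorization D st I Is"
    using homog_comax_factorization_exists[OF assms(3-8)] .
  then show ?thesis
    using homog_comax_factorization_unique by blast
qed

end
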